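(* Let $a_2,a_3$ be integers with $1<a_2<a_3$, $A=\{1,a_2,a_3\}$, and let $SG(A,n,p)$ be a stride generator. Then the smallest break $y$ of $SG(A,n,p)$ satisfies $y=\mathrm{str}(T_p)-1$ or $y=\mathrm{end}(T_p)$ for some thread $T_p$ of order $p$.
   Context: For integers $n$ and $i\ge 0$, an integer $x$ has an $n$-generation of order $i$ if there are integers $c_1,c_2\ge 0$ with $x+ia_3=c_2a_2+c_1$ and $c_1+c_2\le n+i$. For integers $n$ and $p\ge0$, $SG(A,n,p)$ is a stride generator if: (A) every integer $0\le x<a_3$ has an $n$-generation of some order $\le p$; (B) at least one integer $0\le x<a_3$ has no $n$-generation of order $<p$; (C) at least one integer $0\le y<a_3$ has no $(n-1)$-generation of any order $\le p+1$. Any such $y$ is called a break. Threads: for integers $e\ge 0$, $i\ge0$ with $n+i-e\ge 0$, the thread $T(e,i)$ is the integer interval $[c,d]$ with $\mathrm{str}=c=ea_2-ia_3$ and $\mathrm{end}=d=c+(n+i)-e$; its order is $i$. Only such intervals meeting $[0,a_3)$ are regarded as threads. *)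

theory Defs
  imports Main
begin

definition has_gen :: "int \<Rightarrow> int \<Rightarrow> int \<Rightarrow> nat \<Rightarrow> int \<Rightarrow> bool" where
  "has_gen a2 a3 n i x \<longleftrightarrow>
     (\<exists>c1 c2::int. c1 \<ge> 0 \<and> c2 \<ge> 0 \<and> x + int i * a3 = c2 * a2 + c1 \<and> c1 + c2 \<le> n + int i)"

definition stride_generator :: "int \<Rightarrow> int \<Rightarrow> int \<Rightarrow> nat \<Rightarrow> bool" where
  "stride_generator a2 a3 n p \<longleftrightarrow>
     (\<forall>x. 0 \<le> x \<and> x < a3 \<longrightarrow> (\<exists>i\<le>p. has_gen a2 a3 n i x)) \<and>
     (\<exists>x. 0 \<le> x \<and> x < a3 \<and> (\<forall>i<p. \<not> has_gen a2 a3 n i x)) \<and>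
     (\<exists>y. 0 \<le> y \<and> y < a3 \<and> (\<forall>i\<le>p+1. \<not> has_gen a2 a3 (n-1) i y))"

definition is_break :: "int \<Rightarrow> int \<Rightarrow> int \<Rightarrow> nat \<Rightarrow> int \<Rightarrow> bool" where
  "is_break a2 a3 n p y \<longleftrightarrow>
     0 \<le> y \<and> y < a3 \<and> (\<forall>i\<le>p+1. \<not> has_gen a2 a3 (n-1) i y)"

definition thread_str :: "int \<Rightarrow> int \<Rightarrow> nat \<Rightarrow> nat \<Rightarrow> int" where
  "thread_str a2 a3 e i = int e * a2 - int i * a3"

definition thread_end :: "int \<Rightarrow> int \<Rightarrow> int \<Rightarrow> nat \<Rightarrow> nat \<Rightarrow> int" where
  "thread_end a2 a3 n e i = thread_str a2 a3 e i + (n + int i) - int e"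

definition is_thread :: "int \<Rightarrow> int \<Rightarrow> int \<Rightarrow> nat \<Rightarrow> nat \<Rightarrow> bool" where
  "is_thread a2 a3 n e i \<longleftrightarrow>
     n + int i - int e \<ge> 0 \<and> thread_end a2 a3 n e i \<ge> 0 \<and> thread_str a2 a3 e i < a3"

end

theory Submission
  imports Defs
begin

text \<open>Write \<open>d = a3 - a2\<close>. For \<open>x \<ge> 0\<close>, an n-generation of \<open>x\<close> of order \<open>i\<close> exists iff
  \<open>x + i d\<close> is a sum of at most \<open>n\<close> coins of values 1 and \<open>a2\<close>; the fewest coins needed are
  \<open>(x + i d) div a2 + (x + i d) mod a2\<close>, and then \<open>x\<close> lies on the thread of order \<open>i\<close> that
  starts at \<open>x - (x + i d) mod a2\<close> and ends at \<open>x\<close> plus \<open>n\<close> minus that coin count. So if the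
  least break \<open>y\<close> is generated in order \<open>p\<close> by exactly \<open>n\<close> coins, it ends a thread.
  Otherwise let \<open>x\<close> be the largest element with no generation of order below \<open>p\<close>:
  \<open>u = x - d\<close> lies in \<open>[0, a2)\<close> and is generated in orders \<open>0\<close> and \<open>p + 1\<close> but in no order
  in between, which forces \<open>(u + j d) mod a2 > u\<close> for \<open>1 \<le> j \<le> p\<close>. Comparing \<open>u\<close> with
  \<open>y - d\<close> (which minimality of \<open>y\<close> keeps below \<open>n\<close>) shows that \<open>y + 1\<close> is generated in order
  \<open>p\<close> by a multiple of \<open>a2\<close>, so \<open>y + 1\<close> starts a thread of order \<open>p\<close>.\<close>

definition coin_count :: "int \<Rightarrow> int \<Rightarrow> int" where
  "coin_count a W = W div a + W mod a"

lemma coin_count_add_mult: "a \<noteq> 0 \<Longrightarrow> coin_count a (W + g * a) = coin_count a W + g"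
  unfolding coin_count_def by simp

lemma coin_count_eq_self: "0 \<le> W \<Longrightarrow> W < a \<Longrightarrow> coin_count a W = W"
  unfolding coin_count_def by simp

lemma coin_count_le_self:
  assumes "0 < a" "0 \<le> W"
  shows "coin_count a W \<le> W"
proof -
  have "0 \<le> W div a" using assms by (simp add: pos_imp_zdiv_nonneg_iff)
  then have "W div a \<le> W div a * a" using assms(1) by (simp add: mult_le_cancel_left1)
  then show ?thesis unfolding coin_count_def using div_mult_mod_eq[of W a] by linarith
qed

lemma coin_count_add_le:
  assumes "0 < a" "0 \<le> c"
  shows "coin_count a (W + c) \<le> coin_count a W + c"
proof -
  have "W + c = (W mod a + c) + W div a * a" by simp
  then have "coin_count a (W + c) = coin_count a (W mod a + c) + W div a"
    using coin_count_add_mult assms(1) by (metis less_irrefl)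
  also have "\<dots> \<le> W mod a + c + W div a"
    using coin_count_le_self[OF assms(1), of "W mod a + c"] assms by simp
  finally show ?thesis unfolding coin_count_def[of a W] by simp
qed

lemma coin_count_diff:
  assumes "0 < a" "0 \<le> c" "c \<le> W mod a"
  shows "coin_count a (W - c) = coin_count a W - c"
proof -
  have "W - c = (W mod a - c) + W div a * a" by simp
  then have "coin_count a (W - c) = coin_count a (W mod a - c) + W div a"
    using coin_count_add_mult assms(1) by (metis less_irrefl)
  also have "coin_count a (W mod a - c) = W mod a - c"
    using assms pos_mod_bound[of a W] by (intro coin_count_eq_self) linarith+
  finally show ?thesis unfolding coin_count_def[of a W] by simp
qed

lemma coin_count_split:
  assumes "0 < a" "A mod a \<le> x"
  shows "coin_count a A + coin_count a B \<le> coin_count a (A + B - x) + x"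
proof -
  define R where "R = B - (x - A mod a)"
  have "A + B - x = R + A div a * a"
    unfolding R_def using div_mult_mod_eq[of A a] by simp
  then have "coin_count a (A + B - x) = coin_count a R + A div a"
    using coin_count_add_mult assms(1) by (metis less_irrefl)
  moreover have "coin_count a B \<le> coin_count a R + (x - A mod a)"
    using coin_count_add_le[OF assms(1), of "x - A mod a" R] assms(2) by (simp add: R_def)
  ultimately show ?thesis unfolding coin_count_def[of a A] by simp
qed

lemma dvd_of_coin_count_succ_le:
  assumes "1 < a" "coin_count a (W + 1) \<le> coin_count a W"
  shows "a dvd W + 1"
proof (rule ccontr)
  assume ndvd: "\<not> a dvd W + 1"
  have "W mod a + 1 \<noteq> a"
  proof
    assume "W mod a + 1 = a"
    have "W + 1 = W div a * a + (W mod a + 1)" by simp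
    also have "\<dots> = (W div a + 1) * a" using \<open>W mod a + 1 = a\<close> by (simp add: algebra_simps)
    finally have "W + 1 = (W div a + 1) * a" .
    with ndvd show False by simp
  qed
  then have small: "W mod a + 1 < a"
    using pos_mod_bound[of a W] assms(1) by linarith
  have "W + 1 = (W mod a + 1) + W div a * a" by simp
  then have "coin_count a (W + 1) = coin_count a (W mod a + 1) + W div a"
    using coin_count_add_mult assms(1) by (metis not_one_less_zero zero_less_iff_neq_zero less_trans)
  also have "\<dots> = coin_count a W + 1"
    using small assms(1) by (simp add: coin_count_eq_self coin_count_def)
  finally show False using assms(2) by simp
qed

definition gen_cost :: "int \<Rightarrow> int \<Rightarrow> int \<Rightarrow> nat \<Rightarrow> int" where
  "gen_cost a2 a3 x i = coin_count a2 (x + int i * (a3 - a2))"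

lemma gen_cost_0: "gen_cost a2 a3 x 0 = coin_count a2 x"
  unfolding gen_cost_def by simp

lemma gen_cost_Suc: "gen_cost a2 a3 x (Suc i) = gen_cost a2 a3 (x + (a3 - a2)) i"
  unfolding gen_cost_def by (simp add: algebra_simps)

lemma gen_cost_add_a2: "a2 \<noteq> 0 \<Longrightarrow> gen_cost a2 a3 (x + a2) i = gen_cost a2 a3 x i + 1"
  unfolding gen_cost_def using coin_count_add_mult[of a2 "x + int i * (a3 - a2)" 1]
  by (simp add: algebra_simps)

lemma has_gen_iff_gen_cost:
  assumes "0 < a2" "a2 \<le> a3" "0 \<le> x"
  shows "has_gen a2 a3 n i x \<longleftrightarrow> gen_cost a2 a3 x i \<le> n"
proof
  assume "has_gen a2 a3 n i x"
  then obtain c1 c2 where c: "0 \<le> c1" "x + int i * a3 = c2 * a2 + c1" "c1 + c2 \<le> n + int i"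
    unfolding has_gen_def by blast
  have "x + int i * (a3 - a2) = c1 + (c2 - int i) * a2"
    using c(2) by (simp add: algebra_simps)
  then have "gen_cost a2 a3 x i = coin_count a2 c1 + (c2 - int i)"
    unfolding gen_cost_def using coin_count_add_mult assms(1) by (metis less_irrefl)
  then show "gen_cost a2 a3 x i \<le> n"
    using coin_count_le_self[OF assms(1) c(1)] c(3) by simp
next
  assume le: "gen_cost a2 a3 x i \<le> n"
  define W where "W = x + int i * (a3 - a2)"
  have "0 \<le> W div a2"
    using assms by (simp add: W_def pos_imp_zdiv_nonneg_iff)
  moreover have "x + int i * a3 = (W div a2 + int i) * a2 + W mod a2"
    using div_mult_mod_eq[of W a2] by (simp add: W_def algebra_simps)
  ultimately show "has_gen a2 a3 n i x"
    unfolding has_gen_def using le assms(1)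
    by (intro exI[of _ "W mod a2"] exI[of _ "W div a2 + int i"])
       (simp add: gen_cost_def coin_count_def W_def)
qed

lemma thread_through:
  assumes "0 < a2" "a2 \<le> a3" "0 \<le> x" "x < a3" "gen_cost a2 a3 x i \<le> n"
  obtains e where "is_thread a2 a3 n e i"
    and "thread_str a2 a3 e i = x - (x + int i * (a3 - a2)) mod a2"
    and "thread_end a2 a3 n e i = x + n - gen_cost a2 a3 x i"
proof
  define W where "W = x + int i * (a3 - a2)"
  define e where "e = nat (W div a2) + i"
  have "0 \<le> W div a2"
    using assms by (simp add: W_def pos_imp_zdiv_nonneg_iff)
  then have e: "int e = W div a2 + int i" by (simp add: e_def)
  show str: "thread_str a2 a3 e i = x - W mod a2"
    unfolding thread_str_def e using div_mult_mod_eq[of W a2] by (simp add: W_def algebra_simps)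
  show "thread_end a2 a3 n e i = x + n - gen_cost a2 a3 x i"
    unfolding thread_end_def str e by (simp add: gen_cost_def coin_count_def W_def)
  moreover have "0 \<le> W mod a2" "gen_cost a2 a3 x i = W div a2 + W mod a2"
    using assms(1) by (simp_all add: gen_cost_def coin_count_def W_def)
  ultimately show "is_thread a2 a3 n e i"
    unfolding is_thread_def str e using assms(3-5) by simp
qed

locale stride_gen =
  fixes a2 a3 n :: int and p :: nat
  assumes a2_gt_1: "1 < a2" and a2_lt_a3: "a2 < a3"
    and stride: "stride_generator a2 a3 n p"
begin

abbreviation "d \<equiv> a3 - a2"

abbreviation "cost \<equiv> gen_cost a2 a3"

lemma has_gen_iff: "0 \<le> x \<Longrightarrow> has_gen a2 a3 m i x \<longleftrightarrow> cost x i \<le> m"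
  using has_gen_iff_gen_cost a2_gt_1 a2_lt_a3 by simp

lemma covered: "0 \<le> x \<Longrightarrow> x < a3 \<Longrightarrow> \<exists>i\<le>p. cost x i \<le> n"
  using stride has_gen_iff unfolding stride_generator_def by blast

lemma is_break_iff:
  "is_break a2 a3 n p y \<longleftrightarrow> 0 \<le> y \<and> y < a3 \<and> (\<forall>i\<le>p + 1. n \<le> cost y i)"
  unfolding is_break_def using has_gen_iff by force

lemma break_ge_d:
  assumes "is_break a2 a3 n p y"
  shows "d \<le> y"
proof (rule ccontr)
  assume "\<not> d \<le> y"
  then obtain i where "i \<le> p" "cost (y + a2) i \<le> n"
    using covered[of "y + a2"] assms a2_gt_1 by (auto simp: is_break_iff)
  moreover have "n \<le> cost y i"
    using assms \<open>i \<le> p\<close> by (simp add: is_break_iff)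
  ultimately show False
    using gen_cost_add_a2[of a2 a3 y i] a2_gt_1 by simp
qed

lemma break_sub_d:
  assumes y: "is_break a2 a3 n p y" and "n \<le> y - d"
  shows "is_break a2 a3 n p (y - d)"
  unfolding is_break_iff
proof (intro conjI allI impI)
  show ge: "0 \<le> y - d" and "y - d < a3"
    using break_ge_d[OF y] y a2_lt_a3 by (auto simp: is_break_iff)
  fix i :: nat
  assume "i \<le> p + 1"
  show "n \<le> cost (y - d) i"
  proof (cases i)
    case 0
    have "y - d < a2" using y by (simp add: is_break_iff)
    then show ?thesis
      using 0 ge assms(2) by (simp add: gen_cost_0 coin_count_eq_self)
  next
    case (Suc k)
    then show ?thesis
      using y \<open>i \<le> p + 1\<close> by (simp add: gen_cost_Suc is_break_iff)
  qed
qed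

lemma exists_late_element:
  obtains x where "d \<le> x" "x < a3" "\<forall>i<p. n < cost x i"
proof -
  define S where "S = {x. 0 \<le> x \<and> x < a3 \<and> (\<forall>i<p. n < cost x i)}"
  have "finite S"
    by (rule finite_subset[of _ "{0..<a3}"]) (auto simp: S_def)
  moreover have "S \<noteq> {}"
  proof -
    obtain x where x: "0 \<le> x" "x < a3" "\<forall>i<p. \<not> has_gen a2 a3 n i x"
      using stride unfolding stride_generator_def by blast
    then have "x \<in> S" unfolding S_def using has_gen_iff[OF x(1)] by (simp add: not_le)
    then show ?thesis by blast
  qed
  ultimately have max: "Max S \<in> S" "\<And>x. x \<in> S \<Longrightarrow> x \<le> Max S" by auto
  have "d \<le> Max S"
  proof (rule ccontr)
    assume "\<not> d \<le> Max S"
    then have "Max S + a2 \<in> S"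
      using max(1) a2_gt_1 gen_cost_add_a2[of a2 a3 "Max S"] by (auto simp: S_def)
    then show False using max(2) a2_gt_1 by fastforce
  qed
  then show thesis using that max(1) by (auto simp: S_def)
qed

definition skipping_residue :: "int \<Rightarrow> bool" where
  "skipping_residue u \<longleftrightarrow> 0 \<le> u \<and> u < a2 \<and> cost u 0 \<le> n
     \<and> (\<forall>i. 1 \<le> i \<and> i \<le> p \<longrightarrow> n < cost u i) \<and> cost u (p + 1) \<le> n"

lemma exists_skipping_residue: "\<exists>u. skipping_residue u"
proof -
  obtain x where x: "d \<le> x" "x < a3" "\<forall>i<p. n < cost x i"
    using exists_late_element by blast
  define u where "u = x - d"
  have u: "0 \<le> u" "u < a2" using x by (auto simp: u_def)
  have shift: "cost u (Suc i) = cost x i" for i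
    by (simp add: gen_cost_Suc u_def)
  obtain i where "i \<le> p" "cost x i \<le> n"
    using covered[of x] x a2_lt_a3 by auto
  with x(3) have "cost x p \<le> n"
    by (metis le_neq_implies_less not_le)
  moreover have mid: "n < cost u i" if "1 \<le> i" "i \<le> p" for i
    using that x(3) shift by (cases i) auto
  moreover have "cost u 0 \<le> n"
  proof -
    obtain i where "i \<le> p" "cost u i \<le> n"
      using covered[of u] u a2_lt_a3 by auto
    with mid have "i = 0" by (metis less_one not_le)
    with \<open>cost u i \<le> n\<close> show ?thesis by simp
  qed
  ultimately show ?thesis
    unfolding skipping_residue_def using u shift by auto
qed

lemma skipping_residue_mod:
  assumes u: "skipping_residue u" and j: "1 \<le> j" "j \<le> p"
  shows "u < (u + int j * d) mod a2"
proof (rule ccontr)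
  assume "\<not> ?thesis"
  then have split: "cost u j + cost u (p + 1 - j) \<le> cost u (p + 1) + u"
    using coin_count_split[of a2 "u + int j * d" u "u + int (p + 1 - j) * d"] a2_gt_1 j
    by (simp add: gen_cost_def of_nat_diff algebra_simps)
  have mid: "n < cost u k" if "1 \<le> k" "k \<le> p" for k
    using u that by (simp add: skipping_residue_def)
  have "n < cost u j" "n < cost u (p + 1 - j)"
    using mid[of j] mid[of "p + 1 - j"] j by auto
  moreover have "cost u (p + 1) \<le> n" "u \<le> n"
    using u by (auto simp: skipping_residue_def gen_cost_0 coin_count_eq_self)
  ultimately show False using split by linarith
qed

lemma least_break_sub_d_lt:
  assumes y: "is_break a2 a3 n p y" and least: "\<forall>y'. is_break a2 a3 n p y' \<longrightarrow> y \<le> y'"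
    and late: "n < cost y p" and u: "skipping_residue u"
  shows "y - d < u"
proof (rule ccontr)
  define v where "v = y - d"
  assume "\<not> y - d < u"
  then have uv: "u \<le> v" by (simp add: v_def)
  have "v < n"
    using break_sub_d[OF y] least a2_lt_a3 by (force simp: v_def)
  obtain i where "i \<le> p" "cost y i \<le> n"
    using covered[of y] y by (auto simp: is_break_iff)
  moreover have "n \<le> cost y i"
    using y \<open>i \<le> p\<close> by (simp add: is_break_iff)
  ultimately have i: "i < p" "cost y i = n"
    using late le_neq_implies_less by fastforce+
  define A where "A = v + int (Suc i) * d"
  have "cost v (Suc i) = n" using i by (simp add: gen_cost_Suc v_def)
  then have cA: "coin_count a2 A = n" by (simp add: gen_cost_def A_def)
  have u_mid: "n < cost u k" if "1 \<le> k" "k \<le> p" for k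
    using u that by (simp add: skipping_residue_def)
  show False
  proof (cases "v - u \<le> A mod a2")
    case True
    then have "cost u (Suc i) = coin_count a2 A - (v - u)"
      using coin_count_diff[of a2 "v - u" A] a2_gt_1 uv
      by (simp add: gen_cost_def A_def algebra_simps)
    then show False using u_mid[of "Suc i"] i cA uv by simp
  next
    case False
    then have "coin_count a2 A + cost u (p - i) \<le> cost u (p + 1) + v"
      using coin_count_split[of a2 A v "u + int (p - i) * d"] a2_gt_1 uv u i(1)
      by (simp add: skipping_residue_def gen_cost_def A_def of_nat_diff algebra_simps)
    moreover have "cost u (p + 1) \<le> n"
      using u by (simp add: skipping_residue_def)
    moreover have "n < cost u (p - i)"
      using u_mid[of "p - i"] i(1) by simp
    ultimately show False
      using cA \<open>v < n\<close> by linarith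
  qed
qed

lemma least_break_succ:
  assumes y: "is_break a2 a3 n p y" and least: "\<forall>y'. is_break a2 a3 n p y' \<longrightarrow> y \<le> y'"
    and late: "n < cost y p"
  shows "y + 1 < a3" "cost (y + 1) p \<le> n" "a2 dvd y + 1 + int p * d"
proof -
  obtain u where u: "skipping_residue u"
    using exists_skipping_residue by blast
  have "y - d < u" using least_break_sub_d_lt[OF y least late u] .
  then show "y + 1 < a3" using u by (simp add: skipping_residue_def)
  then obtain j where j: "j \<le> p" "cost (y + 1) j \<le> n"
    using covered[of "y + 1"] y by (auto simp: is_break_iff)
  have "n \<le> cost y j"
    using y j(1) by (simp add: is_break_iff)
  then have "coin_count a2 (y + int j * d + 1) \<le> coin_count a2 (y + int j * d)"
    using j(2) by (simp add: gen_cost_def algebra_simps)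
  then have "a2 dvd (y + int j * d) + 1"
    using dvd_of_coin_count_succ_le a2_gt_1 by blast
  then obtain g where g: "y + 1 + int j * d = g * a2"
    by (metis dvdE add.commute add.left_commute mult.commute)
  have "j = p"
  proof (rule ccontr)
    assume "j \<noteq> p"
    have "0 < y + 1 - d" using break_ge_d[OF y] by simp
    have shift: "u + int (Suc j) * d = (u - (y + 1 - d)) + g * a2"
      using g by (simp add: algebra_simps)
    have "0 \<le> u - (y + 1 - d)" "u - (y + 1 - d) < a2"
      using \<open>y - d < u\<close> \<open>0 < y + 1 - d\<close> u by (auto simp: skipping_residue_def)
    then have "(u + int (Suc j) * d) mod a2 = u - (y + 1 - d)"
      unfolding shift by simp
    then show False
      using skipping_residue_mod[OF u, of "Suc j"] j \<open>j \<noteq> p\<close> \<open>0 < y + 1 - d\<close> by simp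
  qed
  with j g show "cost (y + 1) p \<le> n" "a2 dvd y + 1 + int p * d" by auto
qed

end

theorem lemma9:
  fixes a2 a3 n :: int and p :: nat and y :: int
  assumes "1 < a2" and "a2 < a3"
    and "stride_generator a2 a3 n p"
    and "is_break a2 a3 n p y"
    and "\<forall>y'. is_break a2 a3 n p y' \<longrightarrow> y \<le> y'"
  shows "\<exists>e::nat. is_thread a2 a3 n e p \<and>
           (y = thread_str a2 a3 e p - 1 \<or> y = thread_end a2 a3 n e p)"
proof -
  interpret stride_gen a2 a3 n p
    using assms(1-3) by unfold_locales
  have y: "0 \<le> y" "y < a3" "n \<le> gen_cost a2 a3 y p"
    using assms(4) by (auto simp: is_break_iff)
  have a2: "0 < a2" "a2 \<le> a3" using assms(1,2) by auto
  show ?thesis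
  proof (cases "gen_cost a2 a3 y p \<le> n")
    case True
    obtain e where "is_thread a2 a3 n e p" "thread_end a2 a3 n e p = y + n - gen_cost a2 a3 y p"
      using thread_through[OF a2 y(1,2) True] .
    with True y(3) show ?thesis by auto
  next
    case False
    then have next_y: "y + 1 < a3" "gen_cost a2 a3 (y + 1) p \<le> n" "a2 dvd y + 1 + int p * (a3 - a2)"
      using least_break_succ assms(4,5) by auto
    obtain e where "is_thread a2 a3 n e p"
      "thread_str a2 a3 e p = y + 1 - (y + 1 + int p * (a3 - a2)) mod a2"
      using thread_through[OF a2 _ next_y(1,2)] y(1) by auto
    with next_y(3) show ?thesis by auto
  qed
qed

end
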